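(* Let $n,m,\ell$ be integers with $n-1\ge m\ge \ell\ge 0$. Then \begin{align*} &\mathfrak Z_n(1^{\{m\}})\,\mathfrak Z_n((-1)^{\{\ell\}})\\ &=\binom{n-m+\ell-1}{n-m-1}\mathfrak Z_n(1^{\{m-\ell\}})+\Big(\prod_{r=1}^{n-1}(1-\zeta_n^r)\Big)\sum_{j=0}^{n-m-2}\binom{n-m+\ell-3-2j}{\ell-1-j}\mathcal Y_n\big(2^{\{m-\ell+1+j\}},1^{\{n-m+\ell-3-2j\}}\big). \end{align*}
   Context: Let $\zeta_n=e^{2\pi\sqrt{-1}/n}$. For integers $s_1,\dots,s_m$ (negative values allowed), define $\mathfrak Z_n(s_1,\dots,s_m):=\sum_{1\le i_1<\cdots<i_m\le n-1}\prod_{k=1}^{m}(1-\zeta_n^{i_k})^{-s_k}$ (equal to $1$ if $m=0$ and to $0$ if $m>n-1$). Define $\mathcal Y_n(s_1,\dots,s_m):=\sum_{\sigma}\mathfrak Z_n(\sigma)$, where $\sigma$ runs over all distinct rearrangements of $(s_1,\dots,s_m)$; $\mathcal Y_n$ of the empty sequence is $1$. Notation: $a^{\{k\}}$ denotes the block $a,\dots,a$ of length $k$ (so $(-1)^{\{\ell\}}$ is $-1,\dots,-1$ repeated $\ell$ times); any $\mathcal Y_n$ term in which some block has negative length is interpreted as $0$. Binomial coefficients $\binom{a}{b}$ are $0$ when $b<0$ or $b>a\ge 0$. *)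

theory Defs
  imports Complex_Main "HOL-Library.Multiset"
begin

definition zeta :: "nat \<Rightarrow> complex" where
  "zeta n = cis (2 * pi / real n)"

definition Zfrak :: "nat \<Rightarrow> int list \<Rightarrow> complex" where
  "Zfrak n s = (\<Sum>is\<in>{is. length is = length s \<and> sorted_wrt (<) is \<and> set is \<subseteq> {1..n-1}}.
      \<Prod>k<length s. (1 - zeta n ^ (is ! k)) powi (- (s ! k)))"

definition Ycal :: "nat \<Rightarrow> int list \<Rightarrow> complex" where
  "Ycal n s = (\<Sum>t\<in>{t. mset t = mset s}. Zfrak n t)"

text \<open>Binomial coefficient for integer arguments, used only with a >= 0:
  zero when b < 0 or b > a.\<close>
definition ibinom :: "int \<Rightarrow> int \<Rightarrow> int" where
  "ibinom a b = (if b < 0 \<or> a < 0 then 0 else int (nat a choose nat b))"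

end

theory Submission
  imports Defs
begin

(*
  Write c_i = 1 - zeta^i for i in D = {1,...,n-1}. For a list s without zeros, Y(s) is the sum of
  the Laurent monomials prod_i c_i^(-f i) over the exponent vectors f on D whose nonzero values form
  the multiset s. Placements of 1^m and of (-1)^l are indicator vectors 1_A and -1_B with |A| = m,
  |B| = l, and multiplying by prod_i c_i^(-1) turns the monomial of such a pair into the monomial of
  1_A - 1_B + 1, an exponent vector with values in {0,1,2}. If it has k twos and r ones, then the
  pair is determined by A meet B, an arbitrary (m-k)-subset of the ones, and r + 2k + l = m + n - 1.
  Hence Z(1^m) Z((-1)^l) = (prod_i c_i) sum_k binom(r_k, m-k) Y(2^k, 1^r_k). The terms with k < m - l
  vanish since then k + r_k > n - 1; the term k = m - l, multiplied by prod_i c_i, is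
  binom(n-m+l-1, l) Z(1^(m-l)) by the case l = 0 of the same expansion; the remaining terms form the
  stated sum.
*)

section \<open>Placements\<close>

definition level_count :: "'a set \<Rightarrow> ('a \<Rightarrow> int) \<Rightarrow> int \<Rightarrow> nat" where
  "level_count D f v = card {i\<in>D. f i = v}"

(* Ysum generalises Ycal from the weights 1 - zeta^i on {1..n-1} to arbitrary weights c on a finite
   set D (see Ycal_eq_Ysum): it sums over the placements of s, the exponent vectors supported on D
   whose nonzero values form the multiset s. *)
definition placements :: "'a set \<Rightarrow> int list \<Rightarrow> ('a \<Rightarrow> int) set" where
  "placements D s = {f. (\<forall>i. i \<notin> D \<longrightarrow> f i = 0) \<and>
     (\<forall>v. v \<noteq> 0 \<longrightarrow> level_count D f v = count (mset s) v)}"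

definition inv_monomial :: "('a \<Rightarrow> 'b::field) \<Rightarrow> 'a set \<Rightarrow> ('a \<Rightarrow> int) \<Rightarrow> 'b" where
  "inv_monomial c D f = (\<Prod>i\<in>D. c i powi (- f i))"

definition Ysum :: "('a \<Rightarrow> 'b::field) \<Rightarrow> 'a set \<Rightarrow> int list \<Rightarrow> 'b" where
  "Ysum c D s = (\<Sum>f\<in>placements D s. inv_monomial c D f)"

lemma count_mset_map_distinct:
  "distinct xs \<Longrightarrow> count (mset (map f xs)) v = card {x\<in>set xs. f x = v}"
proof (induction xs)
  case (Cons x xs)
  have "{y\<in>set (x # xs). f y = v} = (if f x = v then insert x else id) {y\<in>set xs. f y = v}"
    by auto
  with Cons show ?case by (simp add: card_insert_if)
qed simp

lemma finite_functions_supported_on: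
  assumes "finite D" "finite A"
  shows "finite {f. (\<forall>i. i \<notin> D \<longrightarrow> f i = 0) \<and> (\<forall>i\<in>D. f i \<in> A)}"
proof -
  have "{f. (\<forall>i. i \<notin> D \<longrightarrow> f i = 0) \<and> (\<forall>i\<in>D. f i \<in> A)}
      = {f. \<forall>i. (i \<in> D \<longrightarrow> f i \<in> A) \<and> (i \<notin> D \<longrightarrow> f i = 0)}" by auto
  then show ?thesis using finite_set_of_finite_funs[OF assms] by simp
qed

lemma placements_nonzero_value_in_set:
  assumes "finite D" "f \<in> placements D s" "i \<in> D" "f i \<noteq> 0"
  shows "f i \<in> set s"
proof -
  have "i \<in> {j\<in>D. f j = f i}" using assms(3) by simp
  then have "level_count D f (f i) \<noteq> 0"
    using assms(1) by (auto simp: level_count_def)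
  then have "count (mset s) (f i) \<noteq> 0" using assms(2,4) by (simp add: placements_def)
  then show ?thesis by simp
qed

lemma finite_placements:
  assumes "finite D"
  shows "finite (placements D s)"
proof (rule finite_subset)
  show "placements D s \<subseteq> {f. (\<forall>i. i \<notin> D \<longrightarrow> f i = 0) \<and> (\<forall>i\<in>D. f i \<in> insert 0 (set s))}"
    using placements_nonzero_value_in_set[OF assms] by (auto simp: placements_def)
  show "finite \<dots>" using finite_functions_supported_on[OF assms, of "insert 0 (set s)"] by simp
qed

lemma mem_placements_iff:
  assumes "finite D" "set s \<subseteq> V" "0 \<notin> V"
  shows "f \<in> placements D s \<longleftrightarrow> (\<forall>i. i \<notin> D \<longrightarrow> f i = 0) \<and> (\<forall>i\<in>D. f i \<in> insert 0 V)
           \<and> (\<forall>v\<in>V. level_count D f v = count (mset s) v)"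
proof
  assume f: "f \<in> placements D s"
  have "f i \<in> insert 0 V" if "i \<in> D" for i
    using placements_nonzero_value_in_set[OF assms(1) f that] assms(2) by blast
  moreover have "v \<noteq> 0" if "v \<in> V" for v
    using that assms(3) by blast
  ultimately show "(\<forall>i. i \<notin> D \<longrightarrow> f i = 0) \<and> (\<forall>i\<in>D. f i \<in> insert 0 V)
           \<and> (\<forall>v\<in>V. level_count D f v = count (mset s) v)"
    using f by (simp add: placements_def)
next
  assume f: "(\<forall>i. i \<notin> D \<longrightarrow> f i = 0) \<and> (\<forall>i\<in>D. f i \<in> insert 0 V)
           \<and> (\<forall>v\<in>V. level_count D f v = count (mset s) v)"
  have "level_count D f v = count (mset s) v" if "v \<noteq> 0" for v
  proof (cases "v \<in> V")
    case False
    then have "{i\<in>D. f i = v} = {}" using f that by auto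
    moreover have "count (mset s) v = 0" using False assms(2) by (auto simp: count_eq_zero_iff)
    ultimately show ?thesis unfolding level_count_def by (metis card.empty)
  qed (use f in simp)
  with f show "f \<in> placements D s" by (simp add: placements_def)
qed

lemma mem_placements_replicate:
  assumes "finite D" "v \<noteq> 0"
  shows "f \<in> placements D (replicate m v) \<longleftrightarrow>
    (\<forall>i. i \<notin> D \<longrightarrow> f i = 0) \<and> (\<forall>i\<in>D. f i \<in> {0, v}) \<and> level_count D f v = m"
proof -
  have "set (replicate m v) \<subseteq> {v}" by auto
  from mem_placements_iff[OF assms(1) this] assms(2) show ?thesis by simp
qed

lemma mem_placements_twos_ones:
  assumes "finite D"
  shows "f \<in> placements D (replicate a 2 @ replicate b 1) \<longleftrightarrow>
    (\<forall>i. i \<notin> D \<longrightarrow> f i = 0) \<and> (\<forall>i\<in>D. f i \<in> {0, 1, 2})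
      \<and> level_count D f 2 = a \<and> level_count D f 1 = b"
proof -
  have "set (replicate a 2 @ replicate b 1) \<subseteq> {1, 2::int}" by auto
  from mem_placements_iff[OF assms this] show ?thesis by auto
qed

lemma placements_Nil:
  assumes "finite D"
  shows "placements D [] = {\<lambda>_. 0}"
proof -
  have "f = (\<lambda>_. 0)" if "f \<in> placements D []" for f
    using that placements_nonzero_value_in_set[OF assms that] by (auto simp: placements_def)
  then show ?thesis by (auto simp: placements_def level_count_def)
qed

lemma placements_twos_ones_eq_empty:
  assumes "finite D" "card D < a + b"
  shows "placements D (replicate a 2 @ replicate b 1) = {}"
proof (rule ccontr)
  assume "placements D (replicate a 2 @ replicate b 1) \<noteq> {}"
  then obtain f where "f \<in> placements D (replicate a 2 @ replicate b 1)" by blast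
  then have "a = card {i\<in>D. f i = 2}" "b = card {i\<in>D. f i = 1}"
    by (simp_all add: mem_placements_twos_ones[OF assms(1)] level_count_def)
  moreover have "card ({i\<in>D. f i = 2} \<union> {i\<in>D. f i = 1}) = card {i\<in>D. f i = 2} + card {i\<in>D. f i = 1}"
    using assms(1) by (intro card_Un_disjoint) auto
  moreover have "card ({i\<in>D. f i = 2} \<union> {i\<in>D. f i = 1}) \<le> card D"
    using assms(1) by (intro card_mono) auto
  ultimately show False using assms(2) by simp
qed

section \<open>Placements as increasing index tuples\<close>

definition increasing_tuples :: "'a::linorder set \<Rightarrow> nat \<Rightarrow> 'a list set" where
  "increasing_tuples D k = {is. length is = k \<and> sorted_wrt (<) is \<and> set is \<subseteq> D}"

definition placement :: "'a list \<Rightarrow> int list \<Rightarrow> 'a \<Rightarrow> int" where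
  "placement is t i = (case map_of (zip is t) i of None \<Rightarrow> 0 | Some v \<Rightarrow> v)"

lemma placement_nth:
  "length t = length is \<Longrightarrow> distinct is \<Longrightarrow> k < length is \<Longrightarrow> placement is t (is ! k) = t ! k"
  by (simp add: placement_def map_of_zip_nth)

lemma placement_notin: "length t = length is \<Longrightarrow> i \<notin> set is \<Longrightarrow> placement is t i = 0"
  unfolding placement_def by (subst map_of_zip_is_None[THEN iffD2]) simp_all

lemma map_placement: "length t = length is \<Longrightarrow> distinct is \<Longrightarrow> map (placement is t) is = t"
  by (auto intro!: nth_equalityI simp: placement_nth)

lemma support_placement:
  assumes "length t = length is" "distinct is" "0 \<notin> set t"
  shows "{i. placement is t i \<noteq> 0} = set is"
proof -
  have "placement is t i \<noteq> 0" if "i \<in> set is" for i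
  proof -
    obtain k where "k < length is" "i = is ! k" using \<open>i \<in> set is\<close> by (auto simp: in_set_conv_nth)
    with assms show ?thesis by (metis nth_mem placement_nth)
  qed
  with placement_notin[OF assms(1)] show ?thesis by blast
qed

lemma level_count_placement:
  assumes "length t = length is" "distinct is" "set is \<subseteq> D" "v \<noteq> 0"
  shows "level_count D (placement is t) v = count (mset t) v"
proof -
  have "{i\<in>D. placement is t i = v} = {i\<in>set is. placement is t i = v}"
    using assms placement_notin[OF assms(1)] by auto
  then show ?thesis
    using count_mset_map_distinct[OF assms(2), of "placement is t" v] map_placement[OF assms(1,2)]
    by (simp add: level_count_def)
qed

lemma placement_in_placements:
  assumes "mset t = mset s" "is \<in> increasing_tuples D (length s)"
  shows "placement is t \<in> placements D s"
proof -
  have "length t = length is" "distinct is" "set is \<subseteq> D"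
    using assms by (auto simp: increasing_tuples_def strict_sorted_iff dest: mset_eq_length)
  with assms(1) placement_notin[of t "is"] level_count_placement[of t "is" D]
  show ?thesis by (auto simp: placements_def)
qed

lemma inj_on_placement:
  assumes "0 \<notin> set s"
  shows "inj_on (\<lambda>(t, is). placement is t) ({t. mset t = mset s} \<times> increasing_tuples D (length s))"
proof (rule inj_onI, clarify)
  fix t "is" t' is'
  assume "mset t = mset s" "is \<in> increasing_tuples D (length s)"
    "mset t' = mset s" "is' \<in> increasing_tuples D (length s)"
    and eq: "placement is t = placement is' t'"
  with assms have props: "length t = length is" "distinct is" "0 \<notin> set t" "sorted is"
    "length t' = length is'" "distinct is'" "0 \<notin> set t'" "sorted is'"
    by (auto simp: increasing_tuples_def strict_sorted_iff dest: mset_eq_length mset_eq_setD)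
  then have "set is = set is'"
    using support_placement[of t "is"] support_placement[of t' is'] eq by simp
  with props have "is = is'" by (simp add: sorted_distinct_set_unique)
  moreover have "t = t'"
    using map_placement[of t "is"] map_placement[of t' is'] props eq \<open>is = is'\<close> by metis
  ultimately show "t = t' \<and> is = is'" by simp
qed

lemma mset_map_sorted_support:
  assumes "finite D" "0 \<notin> set s" "f \<in> placements D s"
  shows "mset (map f (sorted_list_of_set {i\<in>D. f i \<noteq> 0})) = mset s"
proof -
  let ?is = "sorted_list_of_set {i\<in>D. f i \<noteq> 0}"
  have set_is: "set ?is = {i\<in>D. f i \<noteq> 0}" and dist: "distinct ?is"
    using assms(1) by simp_all
  have "card {i\<in>set ?is. f i = v} = count (mset s) v" for v
  proof (cases "v = 0")
    case True
    then have "card {i\<in>set ?is. f i = v} = 0" by (auto simp: set_is)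
    moreover have "count (mset s) v = 0" using True assms(2) by (simp add: count_eq_zero_iff)
    ultimately show ?thesis by linarith
  next
    case False
    then have "{i\<in>set ?is. f i = v} = {i\<in>D. f i = v}" by (auto simp: set_is)
    with False assms(3) show ?thesis by (simp add: placements_def level_count_def)
  qed
  then show ?thesis by (simp add: multiset_eq_iff count_mset_map_distinct[OF dist, symmetric])
qed

lemma placements_subset_image_placement:
  assumes "finite D" "0 \<notin> set s"
  shows "placements D s \<subseteq> (\<lambda>(t, is). placement is t) ` ({t. mset t = mset s} \<times> increasing_tuples D (length s))"
proof
  fix f assume f: "f \<in> placements D s"
  define "is" where "is = sorted_list_of_set {i\<in>D. f i \<noteq> 0}"
  define t where "t = map f is"
  have set_is: "set is = {i\<in>D. f i \<noteq> 0}" and dist: "distinct is"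
    using assms(1) by (simp_all add: is_def)
  have mset_t: "mset t = mset s" using mset_map_sorted_support[OF assms f] by (simp add: t_def is_def)
  then have "length is = length s" by (metis length_map mset_eq_length t_def)
  then have "is \<in> increasing_tuples D (length s)"
    using set_is by (auto simp: increasing_tuples_def is_def)
  moreover have "placement is t = f"
  proof
    fix i
    show "placement is t i = f i"
    proof (cases "i \<in> set is")
      case True
      then obtain k where "k < length is" "i = is ! k" by (auto simp: in_set_conv_nth)
      then show ?thesis using placement_nth[of t "is" k] dist by (simp add: t_def)
    next
      case False
      then show ?thesis
        using f placement_notin[of t "is" i] by (auto simp: t_def set_is placements_def)
    qed
  qed
  ultimately show "f \<in> (\<lambda>(t, is). placement is t) ` ({t. mset t = mset s} \<times> increasing_tuples D (length s))"
    using mset_t by (auto intro!: image_eqI[where x = "(t, is)"])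
qed

lemma bij_betw_placement:
  assumes "finite D" "0 \<notin> set s"
  shows "bij_betw (\<lambda>(t, is). placement is t)
           ({t. mset t = mset s} \<times> increasing_tuples D (length s)) (placements D s)"
proof (rule bij_betw_imageI)
  show "inj_on (\<lambda>(t, is). placement is t) ({t. mset t = mset s} \<times> increasing_tuples D (length s))"
    using inj_on_placement[OF assms(2)] .
  show "(\<lambda>(t, is). placement is t) ` ({t. mset t = mset s} \<times> increasing_tuples D (length s))
      = placements D s"
    using placements_subset_image_placement[OF assms] placement_in_placements by auto
qed

lemma Ysum_Nil: "finite D \<Longrightarrow> Ysum c D [] = 1"
  by (simp add: Ysum_def placements_Nil inv_monomial_def)

lemma prod_nth_eq_inv_monomial:
  assumes "finite D" "is \<in> increasing_tuples D (length t)"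
  shows "(\<Prod>k<length t. c (is ! k) powi (- (t ! k))) = inv_monomial c D (placement is t)"
proof -
  have dist: "distinct is" and len: "length is = length t" and sub: "set is \<subseteq> D"
    using assms(2) by (auto simp: increasing_tuples_def strict_sorted_iff)
  let ?g = "\<lambda>i. c i powi (- placement is t i)"
  have "inv_monomial c D (placement is t) = (\<Prod>i\<in>set is. ?g i)"
    unfolding inv_monomial_def
    by (rule prod.mono_neutral_right) (use assms(1) sub placement_notin[OF len[symmetric]] in auto)
  also have "\<dots> = (\<Prod>k<length is. ?g (is ! k))"
  proof -
    have "set is = (!) is ` {..<length is}" by (auto simp: set_conv_nth)
    moreover have "inj_on ((!) is) {..<length is}" using dist by (simp add: inj_on_def nth_eq_iff_index_eq)
    ultimately show ?thesis by (simp add: prod.reindex)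
  qed
  also have "\<dots> = (\<Prod>k<length t. c (is ! k) powi (- (t ! k)))"
    using len dist by (auto intro!: prod.cong simp: placement_nth)
  finally show ?thesis by simp
qed

lemma Ysum_eq_sum_increasing_tuples:
  assumes "finite D" "0 \<notin> set s"
  shows "Ysum c D s = (\<Sum>t\<in>{t. mset t = mset s}. \<Sum>is\<in>increasing_tuples D (length s).
           \<Prod>k<length t. c (is ! k) powi (- (t ! k)))"
proof -
  have "Ysum c D s = (\<Sum>p\<in>{t. mset t = mset s} \<times> increasing_tuples D (length s).
          inv_monomial c D ((\<lambda>(t, is). placement is t) p))"
    unfolding Ysum_def by (rule sum.reindex_bij_betw[OF bij_betw_placement[OF assms], symmetric])
  also have "\<dots> = (\<Sum>t\<in>{t. mset t = mset s}. \<Sum>is\<in>increasing_tuples D (length s).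
          inv_monomial c D (placement is t))"
    by (simp add: sum.cartesian_product case_prod_unfold)
  also have "\<dots> = (\<Sum>t\<in>{t. mset t = mset s}. \<Sum>is\<in>increasing_tuples D (length s).
           \<Prod>k<length t. c (is ! k) powi (- (t ! k)))"
  proof (intro sum.cong refl)
    fix t "is" assume "t \<in> {t. mset t = mset s}" "is \<in> increasing_tuples D (length s)"
    then have "is \<in> increasing_tuples D (length t)" by (auto dest: mset_eq_length)
    then show "inv_monomial c D (placement is t) = (\<Prod>k<length t. c (is ! k) powi (- (t ! k)))"
      by (rule prod_nth_eq_inv_monomial[OF assms(1), symmetric])
  qed
  finally show ?thesis .
qed

lemma inv_monomial_add:
  assumes "\<forall>i\<in>D. c i \<noteq> 0"
  shows "inv_monomial c D (\<lambda>i. f i + g i) = inv_monomial c D f * inv_monomial c D g"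
  unfolding inv_monomial_def prod.distrib[symmetric]
proof (intro prod.cong refl)
  fix i assume "i \<in> D"
  with assms have "c i \<noteq> 0" by blast
  then show "c i powi - (f i + g i) = c i powi - f i * c i powi - g i"
    using power_int_add[of "c i" "- f i" "- g i"] by simp
qed

lemma inv_monomial_indicator_mult_prod:
  assumes "\<forall>i\<in>D. c i \<noteq> 0"
  shows "inv_monomial c D (\<lambda>i. of_bool (i \<in> D)) * (\<Prod>i\<in>D. c i) = 1"
  unfolding inv_monomial_def prod.distrib[symmetric]
  using assms by (intro prod.neutral) (simp add: power_int_minus)

section \<open>The product of Y-sums of ones and of minus ones\<close>

lemma sum_comp_eq_sum_card_fibres:
  assumes "finite A" "finite B" "h ` A \<subseteq> B"
  shows "(\<Sum>a\<in>A. g (h a)) = (\<Sum>b\<in>B. of_nat (card {a\<in>A. h a = b}) * g b)"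
proof -
  have "(\<Sum>a\<in>A. g (h a)) = (\<Sum>b\<in>B. \<Sum>a\<in>{a\<in>A. h a = b}. g (h a))"
    by (rule sum.group[OF assms, symmetric])
  also have "\<dots> = (\<Sum>b\<in>B. of_nat (card {a\<in>A. h a = b}) * g b)"
    by (intro sum.cong refl) simp
  finally show ?thesis .
qed

definition shifted_sum :: "'a set \<Rightarrow> ('a \<Rightarrow> int) \<times> ('a \<Rightarrow> int) \<Rightarrow> 'a \<Rightarrow> int" where
  "shifted_sum D = (\<lambda>(g, h) i. g i + h i + of_bool (i \<in> D))"

lemma shifted_sum_fibre_subset:
  fixes f :: "'a \<Rightarrow> int"
  assumes "finite D"
  defines "S \<equiv> \<lambda>v. {i\<in>D. f i = v}"
  shows "{p \<in> placements D (replicate m 1) \<times> placements D (replicate l (-1)). shifted_sum D p = f}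
       \<subseteq> (\<lambda>C. (\<lambda>i. of_bool (i \<in> S 2 \<union> C), \<lambda>i. - of_bool (i \<in> S 0 \<union> C)))
            ` {C. C \<subseteq> S 1 \<and> card (S 2 \<union> C) = m \<and> card (S 0 \<union> C) = l}"
    (is "?F \<subseteq> ?pair ` ?C")
proof
  fix p assume "p \<in> ?F"
  then obtain g h where p: "p = (g, h)" and g: "g \<in> placements D (replicate m 1)"
    and h: "h \<in> placements D (replicate l (-1))" and sum: "shifted_sum D (g, h) = f"
    by blast
  define C where "C = {i\<in>D. g i = 1 \<and> h i = -1}"
  have g_D: "\<forall>i. i \<notin> D \<longrightarrow> g i = 0" "\<forall>i\<in>D. g i \<in> {0, 1}" "level_count D g 1 = m"
    using g mem_placements_replicate[OF assms(1)] by auto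
  have h_D: "\<forall>i. i \<notin> D \<longrightarrow> h i = 0" "\<forall>i\<in>D. h i \<in> {0, -1}" "level_count D h (-1) = l"
    using h mem_placements_replicate[OF assms(1)] by auto
  have f_eq: "f i = g i + h i + of_bool (i \<in> D)" for i
    using sum by (auto simp: shifted_sum_def)
  have vals: "g i \<in> {0, 1}" "h i \<in> {0, -1}" if "i \<in> D" for i
    using that g_D h_D by auto
  have g_eq: "g i = of_bool (i \<in> S 2 \<union> C)" for i
    using vals[of i] f_eq[of i] g_D(1) by (cases "i \<in> D") (auto simp: S_def C_def)
  have h_eq: "h i = - of_bool (i \<in> S 0 \<union> C)" for i
    using vals[of i] f_eq[of i] h_D(1) by (cases "i \<in> D") (auto simp: S_def C_def)
  have "C \<subseteq> S 1" using f_eq by (auto simp: S_def C_def)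
  moreover have "card (S 2 \<union> C) = m"
  proof -
    have "S 2 \<union> C \<subseteq> D" by (auto simp: S_def C_def)
    then have "{i\<in>D. g i = 1} = S 2 \<union> C" using g_eq by auto
    then show ?thesis using g_D(3) by (simp add: level_count_def)
  qed
  moreover have "card (S 0 \<union> C) = l"
  proof -
    have "S 0 \<union> C \<subseteq> D" by (auto simp: S_def C_def)
    then have "{i\<in>D. h i = -1} = S 0 \<union> C" using h_eq by auto
    then show ?thesis using h_D(3) by (simp add: level_count_def)
  qed
  moreover have "p = ?pair C" using g_eq h_eq by (simp add: p fun_eq_iff)
  ultimately show "p \<in> ?pair ` ?C" by blast
qed

lemma shifted_sum_fibre_supset:
  assumes "finite D" and f_out: "\<forall>i. i \<notin> D \<longrightarrow> f i = 0" and f_val: "\<forall>i\<in>D. f i \<in> {0, 1, 2}"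
  defines "S \<equiv> \<lambda>v. {i\<in>D. f i = v}"
  shows "(\<lambda>C. (\<lambda>i. of_bool (i \<in> S 2 \<union> C), \<lambda>i. - of_bool (i \<in> S 0 \<union> C)))
            ` {C. C \<subseteq> S 1 \<and> card (S 2 \<union> C) = m \<and> card (S 0 \<union> C) = l}
       \<subseteq> {p \<in> placements D (replicate m 1) \<times> placements D (replicate l (-1)). shifted_sum D p = f}"
    (is "?pair ` ?C \<subseteq> ?F")
proof
  fix p assume "p \<in> ?pair ` ?C"
  then obtain C where C: "C \<subseteq> S 1" "card (S 2 \<union> C) = m" "card (S 0 \<union> C) = l"
    and p: "p = ?pair C" by blast
  have sub: "S 2 \<union> C \<subseteq> D" "S 0 \<union> C \<subseteq> D" using C(1) by (auto simp: S_def)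
  then have "{i\<in>D. of_bool (i \<in> S 2 \<union> C) = (1::int)} = S 2 \<union> C"
    "{i\<in>D. - of_bool (i \<in> S 0 \<union> C) = (-1::int)} = S 0 \<union> C" by auto
  then have "level_count D (\<lambda>i. of_bool (i \<in> S 2 \<union> C)) 1 = m"
    "level_count D (\<lambda>i. - of_bool (i \<in> S 0 \<union> C)) (-1) = l"
    unfolding level_count_def using C(2,3) by presburger+
  with sub have "(\<lambda>i. of_bool (i \<in> S 2 \<union> C)) \<in> placements D (replicate m 1)"
    "(\<lambda>i. - of_bool (i \<in> S 0 \<union> C)) \<in> placements D (replicate l (-1))"
    by (subst mem_placements_replicate[OF assms(1)]; auto)+
  moreover have "of_bool (i \<in> S 2 \<union> C) - of_bool (i \<in> S 0 \<union> C) + of_bool (i \<in> D) = f i" for i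
    using f_out f_val C(1) by (cases "i \<in> D") (auto simp: S_def)
  ultimately show "p \<in> ?F" by (simp add: p shifted_sum_def)
qed

lemma shifted_sum_fibre:
  assumes "finite D" "\<forall>i. i \<notin> D \<longrightarrow> f i = 0" "\<forall>i\<in>D. f i \<in> {0, 1, 2}"
  defines "S \<equiv> \<lambda>v. {i\<in>D. f i = v}"
  shows "{p \<in> placements D (replicate m 1) \<times> placements D (replicate l (-1)). shifted_sum D p = f}
       = (\<lambda>C. (\<lambda>i. of_bool (i \<in> S 2 \<union> C), \<lambda>i. - of_bool (i \<in> S 0 \<union> C)))
            ` {C. C \<subseteq> S 1 \<and> card (S 2 \<union> C) = m \<and> card (S 0 \<union> C) = l}"
  unfolding S_def using shifted_sum_fibre_subset[OF assms(1)] shifted_sum_fibre_supset[OF assms(1-3)]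
  by (rule equalityI)

lemma level_counts_012_sum:
  assumes "finite D" "\<forall>i\<in>D. f i \<in> {0, 1, 2}"
  shows "level_count D f 0 + level_count D f 1 + level_count D f 2 = card D"
proof -
  let ?S = "\<lambda>v. {i\<in>D. f i = v}"
  have "D = ?S 0 \<union> ?S 1 \<union> ?S 2" using assms(2) by auto
  moreover have "card (?S 0 \<union> ?S 1 \<union> ?S 2) = card (?S 0 \<union> ?S 1) + card (?S 2)"
    using assms(1) by (intro card_Un_disjoint) auto
  moreover have "card (?S 0 \<union> ?S 1) = card (?S 0) + card (?S 1)"
    using assms(1) by (intro card_Un_disjoint) auto
  ultimately show ?thesis by (simp add: level_count_def)
qed

lemma card_shifted_sum_fibre:
  assumes "finite D" and f_out: "\<forall>i. i \<notin> D \<longrightarrow> f i = 0" and f_val: "\<forall>i\<in>D. f i \<in> {0, 1, 2}"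
  shows "card {p \<in> placements D (replicate m 1) \<times> placements D (replicate l (-1)). shifted_sum D p = f}
       = (if level_count D f 2 \<le> m \<and> level_count D f 1 + 2 * level_count D f 2 + l = m + card D
          then level_count D f 1 choose (m - level_count D f 2) else 0)"
proof -
  define S where "S = (\<lambda>v. {i\<in>D. f i = v})"
  define k where "k = level_count D f 2"
  define r where "r = level_count D f 1"
  let ?pair = "\<lambda>C. (\<lambda>i. of_bool (i \<in> S 2 \<union> C) :: int, \<lambda>i. - of_bool (i \<in> S 0 \<union> C) :: int)"
  have fin: "finite (S v)" for v using assms(1) by (simp add: S_def)
  have kr: "card (S 2) = k" "card (S 1) = r" by (simp_all add: S_def k_def r_def level_count_def)
  have card_D: "card (S 0) + r + k = card D"
    using level_counts_012_sum[OF assms(1) f_val] by (simp add: S_def k_def r_def level_count_def)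
  let ?X = "{C. C \<subseteq> S 1 \<and> card (S 2 \<union> C) = m \<and> card (S 0 \<union> C) = l}"
  have "inj_on ?pair {C. C \<subseteq> S 1}"
  proof (rule inj_onI)
    fix C C' assume C: "C \<in> {C. C \<subseteq> S 1}" "C' \<in> {C. C \<subseteq> S 1}" and eq: "?pair C = ?pair C'"
    then have "(\<lambda>i. of_bool (i \<in> S 2 \<union> C) :: int) = (\<lambda>i. of_bool (i \<in> S 2 \<union> C'))"
      using eq by (metis Pair_inject)
    then have "S 2 \<union> C = S 2 \<union> C'" by (metis of_bool_eq_iff set_eqI)
    moreover have "S 2 \<inter> S 1 = {}" by (auto simp: S_def)
    ultimately show "C = C'" using C by blast
  qed
  then have "card (?pair ` ?X) = card ?X"
    by (intro card_image) (rule inj_on_subset, auto)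
  moreover have "card (S 2 \<union> C) = k + card C" "card (S 0 \<union> C) = card (S 0) + card C"
    if "C \<subseteq> S 1" for C
  proof -
    have "S 2 \<inter> C = {}" "S 0 \<inter> C = {}" using that by (auto simp: S_def)
    with fin kr finite_subset[OF that fin]
    show "card (S 2 \<union> C) = k + card C" "card (S 0 \<union> C) = card (S 0) + card C"
      by (simp_all add: card_Un_disjoint)
  qed
  then have "?X = (if k \<le> m \<and> r + 2 * k + l = m + card D then {C. C \<subseteq> S 1 \<and> card C = m - k} else {})"
    using card_D by auto
  then have "card ?X = (if k \<le> m \<and> r + 2 * k + l = m + card D then r choose (m - k) else 0)"
    using n_subsets[OF fin, of 1 "m - k"] kr by simp
  ultimately have "card (?pair ` ?X) = (if k \<le> m \<and> r + 2 * k + l = m + card D then r choose (m - k) else 0)"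
    by simp
  then show ?thesis
    unfolding shifted_sum_fibre[OF assms] S_def k_def r_def .
qed

lemma shifted_sum_values:
  assumes "finite D" "g \<in> placements D (replicate m 1)" "h \<in> placements D (replicate l (-1))"
  shows "(\<forall>i. i \<notin> D \<longrightarrow> shifted_sum D (g, h) i = 0) \<and> (\<forall>i\<in>D. shifted_sum D (g, h) i \<in> {0, 1, 2})"
proof -
  have "\<forall>i. i \<notin> D \<longrightarrow> g i = 0 \<and> h i = 0" "\<forall>i\<in>D. g i \<in> {0, 1} \<and> h i \<in> {0, -1}"
    using assms by (simp_all add: mem_placements_replicate[OF assms(1)])
  then show ?thesis by (auto simp: shifted_sum_def)
qed

lemma inv_monomial_shifted_sum:
  assumes "\<forall>i\<in>D. c i \<noteq> 0"
  shows "inv_monomial c D g * inv_monomial c D h = (\<Prod>i\<in>D. c i) * inv_monomial c D (shifted_sum D (g, h))"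
proof -
  have "inv_monomial c D (shifted_sum D (g, h))
      = inv_monomial c D g * inv_monomial c D h * inv_monomial c D (\<lambda>i. of_bool (i \<in> D))"
    unfolding shifted_sum_def by (simp add: inv_monomial_add[OF assms])
  then show ?thesis
    using inv_monomial_indicator_mult_prod[OF assms] by (simp add: algebra_simps)
qed

definition expansion_term :: "('a \<Rightarrow> 'b::field) \<Rightarrow> 'a set \<Rightarrow> nat \<Rightarrow> nat \<Rightarrow> nat \<Rightarrow> 'b" where
  "expansion_term c D m l k =
     (if k \<le> m \<and> 2 * k + l \<le> m + card D
      then of_nat ((m + card D - l - 2 * k) choose (m - k))
             * Ysum c D (replicate k 2 @ replicate (m + card D - l - 2 * k) 1)
      else 0)"

lemma sum_by_levels_eq_sum_expansion_term:
  assumes "finite D"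
  shows "(\<Sum>f\<in>{f. (\<forall>i. i \<notin> D \<longrightarrow> f i = 0) \<and> (\<forall>i\<in>D. f i \<in> {0, 1, 2})}.
            of_nat (if level_count D f 2 \<le> m \<and> level_count D f 1 + 2 * level_count D f 2 + l = m + card D
                    then level_count D f 1 choose (m - level_count D f 2) else 0) * inv_monomial c D f)
         = (\<Sum>k\<le>card D. expansion_term c D m l k)"
    (is "(\<Sum>f\<in>?V. ?w f) = _")
proof -
  have "finite ?V" using finite_functions_supported_on[OF assms, of "{0, 1, 2}"] by simp
  have "level_count D f 2 \<le> card D" for f
    unfolding level_count_def using assms by (intro card_mono) auto
  then have "(\<Sum>f\<in>?V. ?w f) = (\<Sum>k\<le>card D. \<Sum>f\<in>{f\<in>?V. level_count D f 2 = k}. ?w f)"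
    by (intro sum.group[symmetric] \<open>finite ?V\<close>) auto
  also have "\<dots> = (\<Sum>k\<le>card D. expansion_term c D m l k)"
  proof (intro sum.cong refl)
    fix k
    define r where "r = m + card D - l - 2 * k"
    show "(\<Sum>f\<in>{f\<in>?V. level_count D f 2 = k}. ?w f) = expansion_term c D m l k"
    proof (cases "k \<le> m \<and> 2 * k + l \<le> m + card D")
      case True
      then have "(\<Sum>f\<in>{f\<in>?V. level_count D f 2 = k}. ?w f)
          = (\<Sum>f\<in>{f\<in>?V. level_count D f 2 = k}.
               if level_count D f 1 = r then of_nat (r choose (m - k)) * inv_monomial c D f else 0)"
        by (intro sum.cong refl) (auto simp: r_def)
      also have "\<dots> = (\<Sum>f\<in>{g\<in>{f\<in>?V. level_count D f 2 = k}. level_count D g 1 = r}.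
               of_nat (r choose (m - k)) * inv_monomial c D f)"
        by (rule sum.inter_filter[symmetric], rule finite_subset[OF _ \<open>finite ?V\<close>]) auto
      also have "{g\<in>{f\<in>?V. level_count D f 2 = k}. level_count D g 1 = r}
          = placements D (replicate k 2 @ replicate r 1)"
        by (auto simp: mem_placements_twos_ones[OF assms])
      finally show ?thesis
        using True by (simp add: expansion_term_def Ysum_def sum_distrib_left r_def)
    next
      case False
      then show ?thesis by (auto simp: expansion_term_def intro: sum.neutral)
    qed
  qed
  finally show ?thesis .
qed

lemma Ysum_product_expansion:
  assumes "finite D" "\<forall>i\<in>D. c i \<noteq> 0"
  shows "Ysum c D (replicate m 1) * Ysum c D (replicate l (-1))
       = (\<Prod>i\<in>D. c i) * (\<Sum>k\<le>card D. expansion_term c D m l k)"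
proof -
  let ?G = "placements D (replicate m 1)" and ?H = "placements D (replicate l (-1))"
  let ?V = "{f :: 'a \<Rightarrow> int. (\<forall>i. i \<notin> D \<longrightarrow> f i = 0) \<and> (\<forall>i\<in>D. f i \<in> {0, 1, 2})}"
  have fin: "finite (?G \<times> ?H)" "finite ?V"
    using finite_placements[OF assms(1)] finite_functions_supported_on[OF assms(1), of "{0, 1, 2}"]
    by simp_all
  have "shifted_sum D ` (?G \<times> ?H) \<subseteq> ?V"
  proof (rule image_subsetI)
    fix p assume "p \<in> ?G \<times> ?H"
    then have "(\<forall>i. i \<notin> D \<longrightarrow> shifted_sum D (fst p, snd p) i = 0)
        \<and> (\<forall>i\<in>D. shifted_sum D (fst p, snd p) i \<in> {0, 1, 2})"
      by (intro shifted_sum_values[OF assms(1)]) auto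
    then show "shifted_sum D p \<in> ?V" by simp
  qed
  note fibres = sum_comp_eq_sum_card_fibres[OF fin this]
  have "Ysum c D (replicate m 1) * Ysum c D (replicate l (-1))
      = (\<Sum>(g, h)\<in>?G \<times> ?H. inv_monomial c D g * inv_monomial c D h)"
    by (simp add: Ysum_def sum_product sum.cartesian_product)
  also have "\<dots> = (\<Prod>i\<in>D. c i) * (\<Sum>p\<in>?G \<times> ?H. inv_monomial c D (shifted_sum D p))"
    unfolding sum_distrib_left by (intro sum.cong refl) (auto simp: inv_monomial_shifted_sum[OF assms(2)])
  also have "\<dots> = (\<Prod>i\<in>D. c i) * (\<Sum>f\<in>?V. of_nat (if level_count D f 2 \<le> m
          \<and> level_count D f 1 + 2 * level_count D f 2 + l = m + card D
        then level_count D f 1 choose (m - level_count D f 2) else 0) * inv_monomial c D f)"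
    unfolding fibres by (intro arg_cong2[where f = times] sum.cong refl)
      (simp add: card_shifted_sum_fibre[OF assms(1)])
  also have "\<dots> = (\<Prod>i\<in>D. c i) * (\<Sum>k\<le>card D. expansion_term c D m l k)"
    by (simp only: sum_by_levels_eq_sum_expansion_term[OF assms(1)])
  finally show ?thesis .
qed

lemma expansion_term_eq_0:
  assumes "finite D" "k < m - l \<or> card D < k + l"
  shows "expansion_term c D m l k = 0"
proof (cases "k \<le> m \<and> 2 * k + l \<le> m + card D")
  case True
  define r where "r = m + card D - l - 2 * k"
  have expansion: "expansion_term c D m l k = of_nat (r choose (m - k)) * Ysum c D (replicate k 2 @ replicate r 1)"
    unfolding expansion_term_def if_P[OF True] r_def ..
  from assms(2) True consider "card D < k + r" | "r < m - k" by (auto simp: r_def)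
  then show ?thesis
  proof cases
    case 1
    then show ?thesis by (simp add: expansion Ysum_def placements_twos_ones_eq_empty[OF assms(1)])
  next
    case 2
    then show ?thesis by (simp add: expansion binomial_eq_0)
  qed
qed (auto simp: expansion_term_def)

lemma sum_expansion_term_split:
  assumes "finite D" "l \<le> m" "m \<le> card D"
  shows "(\<Sum>k\<le>card D. expansion_term c D m l k)
       = of_nat ((card D - m + l) choose l) * Ysum c D (replicate (m - l) 2 @ replicate (card D - m + l) 1)
         + (\<Sum>j<card D - m. expansion_term c D m l (m - l + 1 + j))"
proof -
  have "(\<Sum>k\<le>card D. expansion_term c D m l k) = (\<Sum>k\<in>{m - l..card D - l}. expansion_term c D m l k)"
    using assms by (intro sum.mono_neutral_right) (auto intro!: expansion_term_eq_0)
  also have "\<dots> = expansion_term c D m l (m - l) + (\<Sum>k\<in>{Suc (m - l)..card D - l}. expansion_term c D m l k)"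
    using assms by (intro sum.atLeast_Suc_atMost) simp
  also have "(\<Sum>k\<in>{Suc (m - l)..card D - l}. expansion_term c D m l k)
      = (\<Sum>j<card D - m. expansion_term c D m l (m - l + 1 + j))"
    by (rule sum.reindex_bij_witness[where i = "\<lambda>j. m - l + 1 + j" and j = "\<lambda>k. k - Suc (m - l)"])
      (use assms in auto)
  also have "expansion_term c D m l (m - l)
      = of_nat ((card D - m + l) choose l) * Ysum c D (replicate (m - l) 2 @ replicate (card D - m + l) 1)"
  proof -
    have "m - l \<le> m \<and> 2 * (m - l) + l \<le> m + card D" "m + card D - l - 2 * (m - l) = card D - m + l"
      "m - (m - l) = l" using assms by auto
    then show ?thesis unfolding expansion_term_def by (simp only: simp_thms if_True)
  qed
  finally show ?thesis .
qed

lemma Ysum_ones_eq: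
  assumes "finite D" "\<forall>i\<in>D. c i \<noteq> 0" "a \<le> card D"
  shows "Ysum c D (replicate a 1) = (\<Prod>i\<in>D. c i) * Ysum c D (replicate a 2 @ replicate (card D - a) 1)"
proof -
  have "(\<Sum>j<card D - a. expansion_term c D a 0 (a + 1 + j)) = 0"
    by (simp add: expansion_term_def)
  then show ?thesis
    using Ysum_product_expansion[OF assms(1,2), of a 0] sum_expansion_term_split[OF assms(1), of 0 a c] assms(3)
    by (simp add: Ysum_Nil[OF assms(1)])
qed

theorem Ysum_ones_mult_Ysum_minus_ones:
  assumes "finite D" "\<forall>i\<in>D. c i \<noteq> 0" "l \<le> m" "m \<le> card D"
  shows "Ysum c D (replicate m 1) * Ysum c D (replicate l (-1)) =
    of_nat ((card D - m + l) choose l) * Ysum c D (replicate (m - l) 1)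
    + (\<Prod>i\<in>D. c i) * (\<Sum>j<card D - m. expansion_term c D m l (m - l + 1 + j))"
proof -
  have "card D - (m - l) = card D - m + l" using assms(3,4) by simp
  with Ysum_ones_eq[OF assms(1,2), of "m - l"] assms(4)
  have "Ysum c D (replicate (m - l) 1)
      = (\<Prod>i\<in>D. c i) * Ysum c D (replicate (m - l) 2 @ replicate (card D - m + l) 1)"
    by simp
  then show ?thesis
    unfolding Ysum_product_expansion[OF assms(1,2)] sum_expansion_term_split[OF assms(1,3,4)]
    by (simp add: algebra_simps)
qed

section \<open>Weights at roots of unity\<close>

lemma Ycal_eq_Ysum:
  "0 \<notin> set s \<Longrightarrow> Ycal n s = Ysum (\<lambda>i. 1 - zeta n ^ i) {1..n-1} s"
  by (auto simp: Ycal_def Zfrak_def Ysum_eq_sum_increasing_tuples increasing_tuples_def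
      intro!: sum.cong dest: mset_eq_length)

lemma Zfrak_replicate_eq_Ycal: "Zfrak n (replicate m v) = Ycal n (replicate m v)"
proof -
  have "t = replicate m v" if "mset t = mset (replicate m v)" for t
    using mset_eq_length[OF that] mset_eq_setD[OF that] by (auto intro: replicate_eqI)
  then have "{t. mset t = mset (replicate m v)} = {replicate m v}" by auto
  then show ?thesis by (simp add: Ycal_def)
qed

lemma one_minus_zeta_power_neq_0:
  assumes "i \<in> {1..n-1}"
  shows "1 - zeta n ^ i \<noteq> 0"
proof
  assume "1 - zeta n ^ i = 0"
  then have "cos (real i * (2 * pi / real n)) = 1"
    by (simp add: zeta_def DeMoivre complex_eq_iff)
  then obtain k :: int where k: "real i * (2 * pi / real n) = k * 2 * pi"
    by (auto simp: cos_one_2pi_int)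
  have "1 \<le> i" "i < n" using assms by auto
  then have "real_of_int k * real n = real i"
    using k by (auto simp: field_simps)
  then have "0 < real_of_int k * real n" "real_of_int k * real n < 1 * real n"
    using \<open>1 \<le> i\<close> \<open>i < n\<close> by auto
  then have "0 < k" "k < 1" by (auto simp: zero_less_mult_iff mult_less_cancel_right)
  then show False by simp
qed

lemma expansion_term_shift:
  assumes "card D + 1 = n" "m + 1 \<le> n" "l \<le> m"
  shows "expansion_term c D m l (m - l + 1 + j) =
    (if int n - int m + int l - 3 - 2 * int j < 0 then 0
     else of_int (ibinom (int n - int m + int l - 3 - 2 * int j) (int l - 1 - int j))
       * Ysum c D (replicate (nat (int m - int l + 1 + int j)) 2
                   @ replicate (nat (int n - int m + int l - 3 - 2 * int j)) 1))"
proof (cases "j < l \<and> 2 * (m - l + 1 + j) + l \<le> m + card D")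
  case True
  define r where "r = m + card D - l - 2 * (m - l + 1 + j)"
  have cond: "m - l + 1 + j \<le> m \<and> 2 * (m - l + 1 + j) + l \<le> m + card D"
    and diff: "m - (m - l + 1 + j) = l - 1 - j" using True assms by auto
  have "expansion_term c D m l (m - l + 1 + j)
      = of_nat (r choose (l - 1 - j)) * Ysum c D (replicate (m - l + 1 + j) 2 @ replicate r 1)"
    unfolding expansion_term_def if_P[OF cond] r_def[symmetric] diff ..
  moreover have "int n - int m + int l - 3 - 2 * int j = int r" using True assms by (simp add: r_def)
  moreover have "nat (int m - int l + 1 + int j) = m - l + 1 + j"
    "ibinom (int r) (int l - 1 - int j) = int (r choose (l - 1 - j))"
    using True assms by (auto simp: ibinom_def nat_diff_distrib)
  ultimately show ?thesis by simp
next
  case False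
  then have "int n - int m + int l - 3 - 2 * int j < 0 \<or> int l - 1 - int j < 0"
    using assms by arith
  with False assms show ?thesis by (auto simp: expansion_term_def ibinom_def)
qed

lemma sum_int_atLeastAtMost_eq_sum_lessThan:
  "(\<Sum>j\<in>{0..int K - 1}. g j) = (\<Sum>j<K. g (int j))"
proof -
  have "{0..int K - 1} = int ` {..<K}"
    by (auto simp: image_iff intro!: bexI[of _ "nat _"])
  then show ?thesis by (simp add: sum.reindex)
qed

lemma sum_expansion_term_eq_Ycal_sum:
  assumes "m + 1 \<le> n" "l \<le> m"
  shows "(\<Sum>j<n - 1 - m. expansion_term (\<lambda>i. 1 - zeta n ^ i) {1..n-1} m l (m - l + 1 + j)) =
    (\<Sum>j\<in>{0..int n - int m - 2}.
       (if int n - int m + int l - 3 - 2 * j < 0 then 0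
        else of_int (ibinom (int n - int m + int l - 3 - 2 * j) (int l - 1 - j))
          * Ycal n (replicate (nat (int m - int l + 1 + j)) 2
                    @ replicate (nat (int n - int m + int l - 3 - 2 * j)) 1)))"
proof -
  have card: "card {1..n-1} + 1 = n" and bound: "int n - int m - 2 = int (n - 1 - m) - 1"
    using assms by auto
  show ?thesis
    unfolding bound sum_int_atLeastAtMost_eq_sum_lessThan
    by (intro sum.cong refl) (unfold expansion_term_shift[OF card assms], simp add: Ycal_eq_Ysum)
qed

theorem proposition1:
  fixes n m l :: nat
  assumes "m + 1 \<le> n" and "l \<le> m"
  shows "Zfrak n (replicate m 1) * Zfrak n (replicate l (-1)) =
    of_nat ((n - m + l - 1) choose (n - m - 1)) * Zfrak n (replicate (m - l) 1)
    + (\<Prod>r=1..n-1. (1 - zeta n ^ r))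
      * (\<Sum>j\<in>{0..int n - int m - 2}.
           (if int n - int m + int l - 3 - 2 * j < 0 then 0
            else of_int (ibinom (int n - int m + int l - 3 - 2 * j) (int l - 1 - j))
              * Ycal n (replicate (nat (int m - int l + 1 + j)) 2
                        @ replicate (nat (int n - int m + int l - 3 - 2 * j)) 1)))"
proof -
  let ?c = "\<lambda>i. 1 - zeta n ^ i" and ?D = "{1..n-1}"
  have "\<forall>i\<in>?D. ?c i \<noteq> 0" "m \<le> card ?D" using assms(1) one_minus_zeta_power_neq_0 by auto
  note formula = Ysum_ones_mult_Ysum_minus_ones[OF finite_atLeastAtMost this(1) assms(2) this(2)]
  have "n - m + l - 1 = card ?D - m + l" "n - m - 1 = card ?D - m" using assms by auto
  then have "(n - m + l - 1) choose (n - m - 1) = (card ?D - m + l) choose l"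
    using binomial_symmetric[of l "card ?D - m + l"] by simp
  moreover have "Zfrak n (replicate k 1) = Ysum ?c ?D (replicate k 1)"
    "Zfrak n (replicate k (-1)) = Ysum ?c ?D (replicate k (-1))" for k
    by (simp_all add: Zfrak_replicate_eq_Ycal Ycal_eq_Ysum)
  moreover have "card ?D - m = n - 1 - m" by simp
  ultimately show ?thesis
    using formula by (simp only: sum_expansion_term_eq_Ycal_sum[OF assms])
qed

end
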